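(* Let $k \in \mathbb{N}$ and let $\xi, \varepsilon, \varepsilon', d', d$ be positive constants such that $0 < \xi \ll 1/k \ll \varepsilon \ll \varepsilon' \ll d' \ll d \ll 1$. Suppose $G$ is a graph on $n$ vertices, $A_1, B_1, A_2, B_2, \dots, A_k, B_k$ is a partition of $V(G)$ such that $|A_i|, |B_i| \geq n/3k$ for all $1 \leq i \leq k$, and $R$ is an $(\varepsilon,d)$-reduced graph of $G$ on $A_1, B_1, \dots, A_k, B_k$. Let $(a_i)_{i=1}^k$ and $(b_i)_{i=1}^k$ be integers. Suppose that: (i) $R$ contains the Hamilton cycle $A_1 B_1 A_2 B_2 \dots A_k B_k A_1$; (ii) $R$ contains an edge $A_{i_1}A_{j_1}$ for some $i_1 \neq j_1$; (iii) $R$ contains an edge $B_{i_2}B_{j_2}$ for some $i_2 \neq j_2$; (iv) $(A_i, B_i)_G$ is $(\varepsilon,d)$-super-regular for all $1 \leq i \leq k$; (v) $|a_i|, |b_i| < \xi n$ for each $1 \leq i \leq k$; (vi) $\sum_{i=1}^k a_i + \sum_{i=1}^k b_i = 0$; (vii) $|\sum_{i=1}^k a_i| = |\sum_{i=1}^k b_i| \leq \xi n$. Then there exists a partition $A'_1, B'_1, \dots, A'_k, B'_k$ of $V(G)$ such that $|A'_i| = |A_i| + a_i$ and $|B'_i| = |B_i| + b_i$ for each $1 \leq i \leq k$, $R$ is an $(\varepsilon', d')$-reduced graph of $G$ on $A'_1, B'_1, \dots, A'_k, B'_k$, and $(A'_i, B'_i)_G$ is $(\varepsilon', d')$-super-regular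 for each $1 \leq i \leq k$.
   Context: The hierarchy $0 < \xi \ll 1/k \ll \varepsilon \ll \varepsilon' \ll d' \ll d \ll 1$ means the constants are chosen from right to left, each sufficiently small relative to the previously chosen ones. For disjoint $A, B \subseteq V(G)$, $(A,B)_G$ is the bipartite subgraph of $G$ with classes $A, B$ and all edges of $G$ between them; its density is $d(A,B) = e(A,B)/(|A||B|)$. $(A,B)_G$ is $(\varepsilon,d)$-regular if $d(A,B) \geq d$ and $|d(A,B) - d(X,Y)| < \varepsilon$ for all $X \subseteq A$, $Y \subseteq B$ with $|X| \geq \varepsilon|A|$, $|Y| \geq \varepsilon|B|$; it is $(\varepsilon,d)$-super-regular if moreover every vertex of $A$ has at least $d|B|$ neighbours in $B$ and every vertex of $B$ has at least $d|A|$ neighbours in $A$. Given a partition $V_1, \dots, V_m$ of $V(G)$, a graph $R$ is an $(\varepsilon,d)$-reduced graph of $G$ on $V_1,\dots,V_m$ if $V(R) = \{V_1,\dots,V_m\}$ and $(V_i,V_j)_G$ is $(\varepsilon,d)$-regular whenever $V_iV_j \in E(R)$. If $V'_1,\dots,V'_m$ is another partition of $V(G)$, we say $R$ is an $(\varepsilon',d')$-reduced graph of $G$ on $V'_1,\dots,V'_m$ if $(V'_i,V'_j)_G$ is $(\varepsilon',d')$-regular whenever $V_iV_j \in E(R)$ (with $A'_i$ corresponding to $A_i$ and $B'_i$ to $B_i$). *)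

theory Defs
  imports Main "HOL-Library.Disjoint_Sets" Complex_Main
begin

definition simple_graph :: "nat set \<Rightarrow> (nat \<Rightarrow> nat \<Rightarrow> bool) \<Rightarrow> bool" where
  "simple_graph V E \<longleftrightarrow> finite V \<and> (\<forall>x y. E x y \<longrightarrow> x \<in> V \<and> y \<in> V)
     \<and> (\<forall>x y. E x y \<longrightarrow> E y x) \<and> (\<forall>x. \<not> E x x)"

definition e_between :: "(nat \<Rightarrow> nat \<Rightarrow> bool) \<Rightarrow> nat set \<Rightarrow> nat set \<Rightarrow> nat" where
  "e_between E X Y = card {(x, y). x \<in> X \<and> y \<in> Y \<and> E x y}"

definition density :: "(nat \<Rightarrow> nat \<Rightarrow> bool) \<Rightarrow> nat set \<Rightarrow> nat set \<Rightarrow> real" where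
  "density E X Y = real (e_between E X Y) / (real (card X) * real (card Y))"

definition regular_pair :: "real \<Rightarrow> real \<Rightarrow> (nat \<Rightarrow> nat \<Rightarrow> bool) \<Rightarrow> nat set \<Rightarrow> nat set \<Rightarrow> bool" where
  "regular_pair eps d E A B \<longleftrightarrow> density E A B \<ge> d \<and>
     (\<forall>X Y. X \<subseteq> A \<and> Y \<subseteq> B \<and> real (card X) \<ge> eps * real (card A)
            \<and> real (card Y) \<ge> eps * real (card B)
        \<longrightarrow> \<bar>density E A B - density E X Y\<bar> < eps)"

definition super_regular_pair :: "real \<Rightarrow> real \<Rightarrow> (nat \<Rightarrow> nat \<Rightarrow> bool) \<Rightarrow> nat set \<Rightarrow> nat set \<Rightarrow> bool" where
  "super_regular_pair eps d E A B \<longleftrightarrow> regular_pair eps d E A B \<and>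
     (\<forall>x\<in>A. real (card {y\<in>B. E x y}) \<ge> d * real (card B)) \<and>
     (\<forall>y\<in>B. real (card {x\<in>A. E y x}) \<ge> d * real (card A))"

text \<open>Labels of the 2k clusters A_1,B_1,...,A_k,B_k (vertices of the reduced graph).\<close>
datatype cls = ACl nat | BCl nat

definition valid_cls :: "nat \<Rightarrow> cls \<Rightarrow> bool" where
  "valid_cls k c \<longleftrightarrow> (case c of ACl i \<Rightarrow> 1 \<le> i \<and> i \<le> k | BCl i \<Rightarrow> 1 \<le> i \<and> i \<le> k)"

definition is_cls_partition :: "nat \<Rightarrow> nat set \<Rightarrow> (cls \<Rightarrow> nat set) \<Rightarrow> bool" where
  "is_cls_partition k V P \<longleftrightarrow>
     (\<forall>c c'. valid_cls k c \<and> valid_cls k c' \<and> c \<noteq> c' \<longrightarrow> P c \<inter> P c' = {}) \<and>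
     (\<Union>c\<in>{c. valid_cls k c}. P c) = V"

definition cls_graph :: "nat \<Rightarrow> (cls \<Rightarrow> cls \<Rightarrow> bool) \<Rightarrow> bool" where
  "cls_graph k R \<longleftrightarrow> (\<forall>c c'. R c c' \<longrightarrow> valid_cls k c \<and> valid_cls k c')
     \<and> (\<forall>c c'. R c c' \<longrightarrow> R c' c) \<and> (\<forall>c. \<not> R c c)"

definition reduced_graph_on :: "real \<Rightarrow> real \<Rightarrow> (nat \<Rightarrow> nat \<Rightarrow> bool) \<Rightarrow> nat \<Rightarrow> (cls \<Rightarrow> cls \<Rightarrow> bool) \<Rightarrow> (cls \<Rightarrow> nat set) \<Rightarrow> bool" where
  "reduced_graph_on eps d E k R P \<longleftrightarrow>
     (\<forall>c c'. R c c' \<longrightarrow> regular_pair eps d E (P c) (P c'))"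

end

theory Submission
  imports Defs
begin

text \<open>
Each cluster must gain or lose a prescribed number of vertices, and we achieve this by moving single
vertices. A vertex may move from cluster s to cluster t when s is regular with the partner of t
(the cluster paired with t, i.e. B_i for A_i and A_i for B_i): by
regularity, most vertices of s have almost typical degree into that partner, so one of them can be
moved without spoiling the degree condition of super-regularity. The Hamilton cycle together with an
A-A edge and a B-B edge of the reduced graph provides, for any two clusters, a chain of such moves
of length at most 2k + 1, so the prescribed imbalances are realised by O(k^2 xi n) moves. Since each
cluster has at least n/3k vertices and xi is tiny compared with 1/k, every cluster changes in a
negligible fraction of its vertices, and regularity, densities and minimum degrees survive with
slightly worse constants.
\<close>

section \<open>Regular pairs under small perturbations\<close>

lemma e_between_eq_sum_degrees:
  assumes "finite X" "finite Y"
  shows "e_between E X Y = (\<Sum>x\<in>X. card {y\<in>Y. E x y})"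
proof -
  have "{(x, y). x \<in> X \<and> y \<in> Y \<and> E x y} = Sigma X (\<lambda>x. {y\<in>Y. E x y})" by auto
  then show ?thesis unfolding e_between_def using assms by simp
qed

lemma regular_pair_card_pos:
  assumes "regular_pair eps d E A B" "0 < d"
  shows "card A > 0" "card B > 0"
  using assms unfolding regular_pair_def density_def
  by (cases "card A = 0"; cases "card B = 0"; simp)+

lemma regular_pair_few_low_degree:
  assumes reg: "regular_pair eps d E A B" and "0 < eps" "eps \<le> 1" "0 < d"
  shows "real (card {x\<in>A. real (card {y\<in>B. E x y}) < (d - eps) * card B}) < eps * card A"
proof (rule ccontr)
  define X where "X = {x\<in>A. real (card {y\<in>B. E x y}) < (d - eps) * card B}"
  assume "\<not> ?thesis"
  then have X_large: "eps * card A \<le> real (card X)" unfolding X_def by simp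
  have pos: "card A > 0" "card B > 0" using regular_pair_card_pos[OF reg \<open>0 < d\<close>] by auto
  then have "finite A" "finite B" using card_gt_0_iff by blast+
  have "X \<subseteq> A" unfolding X_def by auto
  have "real (card X) > 0" using X_large pos \<open>0 < eps\<close>
    by (smt (verit) mult_pos_pos of_nat_0_less_iff)
  then have "X \<noteq> {}" "finite X" using \<open>finite A\<close> \<open>X \<subseteq> A\<close> finite_subset by fastforce+
  have "eps * card B \<le> real (card B)" using assms by (intro mult_left_le_one_le) auto
  with reg \<open>X \<subseteq> A\<close> X_large have close: "\<bar>density E A B - density E X B\<bar> < eps"
    unfolding regular_pair_def by blast
  have "real (e_between E X B) = (\<Sum>x\<in>X. real (card {y\<in>B. E x y}))"
    using e_between_eq_sum_degrees[OF \<open>finite X\<close> \<open>finite B\<close>] by simp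
  also have "\<dots> < (\<Sum>x\<in>X. (d - eps) * card B)"
    using \<open>X \<noteq> {}\<close> \<open>finite X\<close> by (intro sum_strict_mono) (auto simp: X_def)
  finally have "real (e_between E X B) < card X * ((d - eps) * card B)" by simp
  then have "density E X B < d - eps"
    unfolding density_def using pos \<open>real (card X) > 0\<close> by (simp add: divide_less_eq mult_ac)
  moreover have "density E A B \<ge> d" using reg unfolding regular_pair_def by simp
  ultimately show False using close by linarith
qed

lemma regular_pair_majority_high_degree:
  assumes "regular_pair eps d E A B" "0 < eps" "2 * eps \<le> 1" "0 < d"
  shows "card A < 2 * card {x\<in>A. (d - eps) * card B \<le> card {y\<in>B. E x y}}"
proof -
  let ?high = "{x\<in>A. (d - eps) * card B \<le> card {y\<in>B. E x y}}"
  let ?low = "{x\<in>A. real (card {y\<in>B. E x y}) < (d - eps) * card B}"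
  have "finite A" using regular_pair_card_pos[OF assms(1,4)] card_gt_0_iff by blast
  have "card A = card ?high + card ?low"
    using \<open>finite A\<close> by (subst card_Un_disjoint[symmetric]) (auto intro: arg_cong[where f = card])
  moreover have "real (card ?low) < eps * card A" using regular_pair_few_low_degree[OF assms(1,2)] assms by simp
  moreover have "2 * eps * card A \<le> card A" using mult_right_mono[of "2 * eps" 1 "card A"] assms by simp
  ultimately show ?thesis by linarith
qed

lemma e_between_subpair:
  assumes fin: "finite X" "finite Y" and sub: "X0 \<subseteq> X" "Y0 \<subseteq> Y"
  shows "e_between E X0 Y0 \<le> e_between E X Y" "e_between E X0 Y0 \<le> card X0 * card Y0"
    and "e_between E X Y + card X0 * card Y0 \<le> e_between E X0 Y0 + card X * card Y"
proof -
  define S S0 where "S = {(x, y). x \<in> X \<and> y \<in> Y \<and> E x y}" "S0 = {(x, y). x \<in> X0 \<and> y \<in> Y0 \<and> E x y}"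
  have fin_prod: "finite (X \<times> Y)" "finite (X0 \<times> Y0)" using fin sub by (auto intro: finite_subset)
  have "S0 \<subseteq> S" "S0 \<subseteq> X0 \<times> Y0" "S \<subseteq> X \<times> Y" using sub by (auto simp: S_S0_def)
  then have "finite S" "finite S0" using fin_prod finite_subset by blast+
  have e: "e_between E X Y = card S" "e_between E X0 Y0 = card S0" by (simp_all add: e_between_def S_S0_def)
  show "e_between E X0 Y0 \<le> e_between E X Y" using card_mono[OF \<open>finite S\<close> \<open>S0 \<subseteq> S\<close>] e by simp
  show "e_between E X0 Y0 \<le> card X0 * card Y0"
    using card_mono[OF fin_prod(2) \<open>S0 \<subseteq> X0 \<times> Y0\<close>] e by (simp add: card_cartesian_product)
  have "S \<subseteq> S0 \<union> (X \<times> Y - X0 \<times> Y0)" by (auto simp: S_S0_def)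
  then have "card S \<le> card (S0 \<union> (X \<times> Y - X0 \<times> Y0))"
    using \<open>finite S0\<close> fin_prod by (intro card_mono) auto
  also have "\<dots> \<le> card S0 + card (X \<times> Y - X0 \<times> Y0)" by (rule card_Un_le)
  also have "card (X \<times> Y - X0 \<times> Y0) = card X * card Y - card X0 * card Y0"
    using sub fin_prod by (subst card_Diff_subset) (auto simp: card_cartesian_product)
  finally have "card S \<le> card S0 + (card X * card Y - card X0 * card Y0)" .
  moreover have "card X0 * card Y0 \<le> card X * card Y" using sub fin by (intro mult_le_mono card_mono)
  ultimately show "e_between E X Y + card X0 * card Y0 \<le> e_between E X0 Y0 + card X * card Y"
    using e by linarith
qed

lemma ratio_diff_le:
  fixes e e0 p p0 :: real
  assumes "0 < p0" "p0 \<le> p" "0 \<le> e0" "e0 \<le> e" "e + p0 \<le> e0 + p" "e0 \<le> p0"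
  shows "\<bar>e / p - e0 / p0\<bar> \<le> 1 - p0 / p"
proof -
  have "p > 0" using assms by linarith
  have "e / p \<le> (e0 + p - p0) / p" using assms \<open>p > 0\<close> by (simp add: divide_right_mono)
  also have "\<dots> = e0 / p + 1 - p0 / p" using \<open>p > 0\<close> by (simp add: add_divide_distrib diff_divide_distrib)
  also have "e0 / p \<le> e0 / p0" using assms by (intro divide_left_mono) auto
  finally have "e / p - e0 / p0 \<le> 1 - p0 / p" by linarith
  moreover have "e0 / p0 - e / p \<le> e0 / p0 * (1 - p0 / p)"
    using assms \<open>p > 0\<close> by (simp add: field_simps divide_right_mono)
  moreover have "e0 / p0 * (1 - p0 / p) \<le> 1 - p0 / p"
    using assms \<open>p > 0\<close> by (intro mult_left_le_one_le) auto
  ultimately show ?thesis by linarith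
qed

lemma density_subpair_diff:
  assumes fin: "finite X" "finite Y" and sub: "X0 \<subseteq> X" "Y0 \<subseteq> Y"
    and pos: "card X0 > 0" "card Y0 > 0"
  shows "\<bar>density E X Y - density E X0 Y0\<bar> \<le> card (X - X0) / card X0 + card (Y - Y0) / card Y0"
proof -
  define x y x0 y0 dx dy where "x = real (card X)" "y = real (card Y)" "x0 = real (card X0)"
    "y0 = real (card Y0)" "dx = real (card (X - X0))" "dy = real (card (Y - Y0))"
  have "card X = card X0 + card (X - X0)" "card Y = card Y0 + card (Y - Y0)"
    using fin sub by (metis card_Diff_subset card_mono finite_subset le_add_diff_inverse)+
  then have sizes: "x = x0 + dx" "y = y0 + dy" unfolding x_y_x0_y0_dx_dy_def by simp_all
  have pos': "x0 > 0" "y0 > 0" "dx \<ge> 0" "dy \<ge> 0" using pos unfolding x_y_x0_y0_dx_dy_def by auto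
  have "x > 0" "y > 0" "x0 * y0 \<le> x * y" using pos' sizes by (auto intro: mult_mono)
  then have "\<bar>density E X Y - density E X0 Y0\<bar> \<le> 1 - x0 * y0 / (x * y)"
    using e_between_subpair[OF assms(1-4), of E] pos'
    unfolding density_def x_y_x0_y0_dx_dy_def
    by (intro ratio_diff_le) (simp_all flip: of_nat_mult of_nat_add)
  also have "1 - x0 * y0 / (x * y) = (x * y - x0 * y0) / (x * y)"
    using \<open>x > 0\<close> \<open>y > 0\<close> by (simp add: field_simps)
  also have "\<dots> = (dx * y + x0 * dy) / (x * y)" by (simp add: sizes algebra_simps)
  also have "\<dots> = dx / x + x0 * dy / (x * y)" using \<open>y > 0\<close> by (simp add: add_divide_distrib)
  also have "\<dots> \<le> dx / x0 + dy / y0"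
  proof (intro add_mono)
    show "dx / x \<le> dx / x0" using pos' sizes by (intro divide_left_mono) auto
    have "x0 * dy / (x * y) = (x0 / x) * (dy / y)" by simp
    also have "\<dots> \<le> 1 * (dy / y0)" using pos' sizes by (intro mult_mono divide_left_mono) auto
    finally show "x0 * dy / (x * y) \<le> dy / y0" by simp
  qed
  finally show ?thesis unfolding x_y_x0_y0_dx_dy_def .
qed

lemma density_subpair_shift:
  fixes r :: real
  assumes "finite X" "finite Y" "X0 \<subseteq> X" "Y0 \<subseteq> Y" "card X0 > 0" "card Y0 > 0"
    and "card (X - X0) \<le> N" "card (Y - Y0) \<le> N"
    and "real N \<le> r * card X0" "real N \<le> r * card Y0"
  shows "\<bar>density E X Y - density E X0 Y0\<bar> \<le> 2 * r"
proof -
  have "card (X - X0) / card X0 \<le> r" "card (Y - Y0) / card Y0 \<le> r"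
    using assms by (auto simp: divide_le_eq mult.commute intro: order_trans[rotated])
  then show ?thesis using density_subpair_diff[OF assms(1-6), of E] by linarith
qed

lemma card_Int_absorbs_small_difference:
  fixes rho :: real
  assumes "finite A" "card A > 0" "card (A - A') \<le> N" "real N \<le> rho * card A" "2 * rho \<le> 1"
  shows "card (A \<inter> A') > 0" "real N \<le> 2 * rho * card (A \<inter> A')"
proof -
  have "0 \<le> rho * card A" using assms(4) of_nat_0_le_iff order_trans by blast
  then have "0 \<le> rho" using assms(2) by (simp add: zero_le_mult_iff)
  have "real (card A) - N \<le> card (A \<inter> A')" using card_Int_Diff[OF assms(1), of A'] assms(3) by simp
  then have "rho * card A - rho * N \<le> rho * card (A \<inter> A')"
    using mult_left_mono[OF _ \<open>0 \<le> rho\<close>] by (metis right_diff_distrib)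
  moreover have "2 * rho * N \<le> N" using mult_right_mono[of "2 * rho" 1 "real N"] assms by simp
  ultimately show "real N \<le> 2 * rho * card (A \<inter> A')" using assms(4) by linarith
  then show "card (A \<inter> A') > 0"
    using \<open>real (card A) - N \<le> card (A \<inter> A')\<close> assms(2) by (auto intro: Nat.gr0I)
qed

lemma large_subset_meets_core:
  fixes rho eps eps' :: real
  assumes "Z \<subseteq> S'" "eps' * card S' \<le> card Z" "finite S" "finite S'"
    and "card (S - S') \<le> N" "card (S' - S) \<le> N" "real N \<le> rho * card S"
    and "0 \<le> rho" "4 * rho \<le> eps'" "2 * eps \<le> eps'" "0 < eps" "eps' \<le> 1"
  shows "eps * card S \<le> card (Z \<inter> S)" "card (Z - S) \<le> N" "real N \<le> rho / eps * card (Z \<inter> S)"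
proof -
  have "Z - S \<subseteq> S' - S" using assms by auto
  then show "card (Z - S) \<le> N" using assms card_mono[of "S' - S"] by (meson finite_Diff order_trans)
  moreover have "card Z = card (Z \<inter> S) + card (Z - S)"
    using card_Int_Diff[of Z S] finite_subset[OF assms(1,4)] by simp
  ultimately have "real (card Z) \<le> card (Z \<inter> S) + N" by simp
  moreover have "real (card S) - N \<le> card S'"
    using card_Int_Diff[OF assms(3), of S'] card_mono[OF assms(4), of "S \<inter> S'"] assms(5) by auto
  then have "eps' * card S - eps' * N \<le> eps' * card S'"
    using mult_left_mono[of _ _ eps'] assms(10,11) by (metis right_diff_distrib less_eq_real_def
        mult_pos_pos order_less_le_trans zero_less_numeral)
  moreover have "eps' * N \<le> N" using mult_right_mono[of eps' 1 "real N"] assms by simp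
  moreover have "4 * rho * card S \<le> eps' * card S" "2 * eps * card S \<le> eps' * card S"
    using assms by (auto intro: mult_right_mono)
  ultimately show core: "eps * card S \<le> card (Z \<inter> S)" using assms(2,7) by linarith
  have "rho * card S = rho / eps * (eps * card S)" using assms(11) by simp
  also have "\<dots> \<le> rho / eps * card (Z \<inter> S)" using core assms(8,11) by (intro mult_left_mono) auto
  finally show "real N \<le> rho / eps * card (Z \<inter> S)" using assms(7) by linarith
qed

lemma regular_pair_perturb:
  fixes rho :: real
  assumes reg: "regular_pair eps d E A B"
    and fin: "finite A'" "finite B'"
    and moved: "card (A - A') \<le> N" "card (A' - A) \<le> N" "card (B - B') \<le> N" "card (B' - B) \<le> N"
    and few: "real N \<le> rho * card A" "real N \<le> rho * card B"
    and par: "0 < eps" "2 * eps \<le> eps'" "eps' \<le> 1" "0 < d" "2 * d' \<le> d"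
      "40 * rho \<le> eps * eps'" "16 * rho \<le> d"
  shows "regular_pair eps' d' E A' B'"
proof -
  have "card A > 0" "card B > 0" using regular_pair_card_pos[OF reg \<open>0 < d\<close>] by auto
  then have "finite A" "finite B" using card_gt_0_iff by blast+
  have "eps * eps' \<le> eps' / 2" using par mult_right_mono[of eps "1/2" eps'] by auto
  then have rho_small: "80 * rho \<le> eps'" using par by linarith
  have "0 \<le> rho * card A" using few(1) of_nat_0_le_iff order_trans by blast
  then have rho_nonneg: "0 \<le> rho" using \<open>card A > 0\<close> by (simp add: zero_le_mult_iff)
  note core_A = card_Int_absorbs_small_difference[OF \<open>finite A\<close> \<open>card A > 0\<close> moved(1) few(1)]
  note core_B = card_Int_absorbs_small_difference[OF \<open>finite B\<close> \<open>card B > 0\<close> moved(3) few(2)]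
  have "A - A \<inter> A' = A - A'" "B - B \<inter> B' = B - B'" "A' - A \<inter> A' = A' - A" "B' - B \<inter> B' = B' - B"
    by auto
  moreover have "2 * rho \<le> 1" using rho_small par(3) by linarith
  ultimately have "\<bar>density E A B - density E (A \<inter> A') (B \<inter> B')\<bar> \<le> 2 * (2 * rho)"
    "\<bar>density E A' B' - density E (A \<inter> A') (B \<inter> B')\<bar> \<le> 2 * (2 * rho)"
    using \<open>finite A\<close> \<open>finite B\<close> fin core_A core_B moved
    by (intro density_subpair_shift[where N = N]; simp)+
  then have shift: "\<bar>density E A B - density E A' B'\<bar> \<le> 8 * rho" by linarith
  have "density E A B \<ge> d" using reg unfolding regular_pair_def by simp
  then have "density E A' B' \<ge> d'" using shift par by linarith
  moreover have "\<bar>density E A' B' - density E X Y\<bar> < eps'"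
    if X: "X \<subseteq> A'" "eps' * card A' \<le> card X" and Y: "Y \<subseteq> B'" "eps' * card B' \<le> card Y" for X Y
  proof -
    have "4 * rho \<le> eps'" using rho_small rho_nonneg by linarith
    note X_core = large_subset_meets_core[OF X \<open>finite A\<close> fin(1) moved(1,2) few(1) rho_nonneg this par(2,1,3)]
      and Y_core = large_subset_meets_core[OF Y \<open>finite B\<close> fin(2) moved(3,4) few(2) rho_nonneg this par(2,1,3)]
    have "card (X \<inter> A) > 0" "card (Y \<inter> B) > 0"
      using X_core(1) Y_core(1) \<open>card A > 0\<close> \<open>card B > 0\<close> par(1)
      by (metis mult_pos_pos of_nat_0_less_iff order_less_le_trans)+
    have "\<bar>density E A B - density E (X \<inter> A) (Y \<inter> B)\<bar> < eps"
      using reg X_core(1) Y_core(1) unfolding regular_pair_def by (meson inf_le2)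
    moreover have "\<bar>density E X Y - density E (X \<inter> A) (Y \<inter> B)\<bar> \<le> 2 * (rho / eps)"
      using X_core Y_core X Y fin \<open>card (X \<inter> A) > 0\<close> \<open>card (Y \<inter> B) > 0\<close>
      by (intro density_subpair_shift) (auto intro: finite_subset simp: Diff_Int)
    moreover have "2 * (rho / eps) \<le> eps' / 20" using par by (simp add: divide_le_eq mult.commute)
    ultimately show ?thesis using shift par rho_small by linarith
  qed
  ultimately show ?thesis unfolding regular_pair_def by blast
qed

lemma degree_perturb:
  fixes d d' eps rho :: real
  assumes fin: "finite B" "finite B'" and moved: "card (B - B') \<le> N" "card (B' - B) \<le> N"
    and few: "real N \<le> rho * card B"
    and deg: "(d - eps) * card B \<le> card {y\<in>B. E x y}"
    and par: "4 * eps \<le> d" "2 * d' \<le> d" "160 * rho \<le> d" "0 < d'" "d \<le> 1"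
  shows "d' * card B' \<le> card {y\<in>B'. E x y}"
proof -
  have "{y\<in>B. E x y} \<subseteq> {y\<in>B'. E x y} \<union> (B - B')" by auto
  then have "card {y\<in>B. E x y} \<le> card ({y\<in>B'. E x y} \<union> (B - B'))"
    using fin by (intro card_mono) auto
  also have "\<dots> \<le> card {y\<in>B'. E x y} + card (B - B')" by (rule card_Un_le)
  finally have lost: "real (card {y\<in>B. E x y}) \<le> card {y\<in>B'. E x y} + N" using moved by linarith
  have "card B' \<le> card B + N" using card_Int_Diff[OF fin(2), of B] card_mono[OF fin(1), of "B' \<inter> B"] moved
    by auto
  then have "d' * card B' \<le> d' * card B + d' * N"
    using mult_left_mono[of "real (card B')" "card B + N" d'] par by (simp add: distrib_left)
  moreover have "d' * N \<le> N" using mult_right_mono[of d' 1 "real N"] par by simp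
  moreover have "4 * eps * card B \<le> d * card B" "2 * d' * card B \<le> d * card B"
    "160 * rho * card B \<le> d * card B"
    using par by (auto intro: mult_right_mono)
  moreover have "(d - eps) * card B = d * card B - eps * card B" by (simp add: left_diff_distrib)
  ultimately show ?thesis using lost deg few by linarith
qed

section \<open>Realising a prescribed net gain by moves\<close>

text \<open>A move \<open>(s, t)\<close> takes one vertex from cluster \<open>s\<close> to cluster \<open>t\<close>.\<close>

definition net_gain :: "('c \<times> 'c) list \<Rightarrow> 'c \<Rightarrow> int" where
  "net_gain L z = (\<Sum>(s, t)\<leftarrow>L. of_bool (z = t) - of_bool (z = s))"

lemma net_gain_Nil [simp]: "net_gain [] z = 0"
  by (simp add: net_gain_def)

lemma net_gain_Cons [simp]:
  "net_gain ((s, t) # L) z = of_bool (z = t) - of_bool (z = s) + net_gain L z"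
  by (simp add: net_gain_def)

lemma net_gain_append [simp]: "net_gain (L1 @ L2) z = net_gain L1 z + net_gain L2 z"
  by (simp add: net_gain_def)

definition transfers :: "('c \<Rightarrow> 'c \<Rightarrow> bool) \<Rightarrow> ('c \<times> 'c) list \<Rightarrow> 'c \<Rightarrow> 'c \<Rightarrow> bool" where
  "transfers mv L c c' \<longleftrightarrow> (\<forall>(s, t)\<in>set L. mv s t) \<and> (\<forall>z. net_gain L z = of_bool (z = c') - of_bool (z = c))"

lemma transfers_Nil: "transfers mv [] c c"
  by (simp add: transfers_def)

lemma transfers_single: "mv s t \<Longrightarrow> transfers mv [(s, t)] s t"
  by (simp add: transfers_def)

lemma transfers_append:
  "transfers mv L1 c c' \<Longrightarrow> transfers mv L2 c' c'' \<Longrightarrow> transfers mv (L1 @ L2) c c''"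
  by (auto simp: transfers_def)

lemma zero_sum_has_pos_and_neg:
  fixes \<delta> :: "'c \<Rightarrow> int"
  assumes "finite C" "sum \<delta> C = 0" "z \<in> C" "\<delta> z \<noteq> 0"
  obtains c c' where "c \<in> C" "\<delta> c < 0" "c' \<in> C" "\<delta> c' > 0"
proof -
  have "\<exists>c'\<in>C. \<delta> c' > 0"
  proof (rule ccontr)
    assume "\<not> ?thesis"
    then have "\<forall>z\<in>C. 0 \<le> - \<delta> z" by (auto simp: not_less)
    with assms show False using sum_nonneg_eq_0_iff[of C "\<lambda>z. - \<delta> z"] by (simp add: sum_negf)
  qed
  moreover have "\<exists>c\<in>C. \<delta> c < 0"
  proof (rule ccontr)
    assume "\<not> ?thesis"
    then have "\<forall>z\<in>C. 0 \<le> \<delta> z" by (auto simp: not_less)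
    with assms show False using sum_nonneg_eq_0_iff[of C \<delta>] by simp
  qed
  ultimately show ?thesis using that by blast
qed

lemma sum_abs_after_unit_transfer:
  fixes \<delta> :: "'c \<Rightarrow> int"
  assumes "finite C" "c \<in> C" "\<delta> c < 0" "c' \<in> C" "\<delta> c' > 0"
  shows "(\<Sum>z\<in>C. \<bar>\<delta> z - (of_bool (z = c') - of_bool (z = c))\<bar>) = (\<Sum>z\<in>C. \<bar>\<delta> z\<bar>) - 2"
proof -
  have "\<bar>\<delta> z - (of_bool (z = c') - of_bool (z = c))\<bar> = \<bar>\<delta> z\<bar> - of_bool (z = c') - of_bool (z = c)"
    for z using assms by auto
  moreover have "(\<Sum>z\<in>C. of_bool (z = c') :: int) = 1" "(\<Sum>z\<in>C. of_bool (z = c) :: int) = 1"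
    using assms by (simp_all add: sum.delta')
  ultimately show ?thesis by (simp add: sum_subtractf)
qed

lemma moves_with_net_gain:
  fixes \<delta> :: "'c \<Rightarrow> int"
  assumes "finite C"
    and connected: "\<And>c c'. c \<in> C \<Longrightarrow> c' \<in> C \<Longrightarrow> \<exists>L. transfers mv L c c' \<and> length L \<le> K"
    and "sum \<delta> C = 0"
  shows "\<exists>L. (\<forall>(s, t)\<in>set L. mv s t) \<and> (\<forall>z\<in>C. net_gain L z = \<delta> z)
    \<and> 2 * length L \<le> K * nat (\<Sum>z\<in>C. \<bar>\<delta> z\<bar>)"
  using \<open>sum \<delta> C = 0\<close>
proof (induction "nat (\<Sum>z\<in>C. \<bar>\<delta> z\<bar>)" arbitrary: \<delta> rule: less_induct)
  case less
  show ?case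
  proof (cases "\<forall>z\<in>C. \<delta> z = 0")
    case True
    then show ?thesis by (intro exI[of _ "[]"]) auto
  next
    case False
    then obtain c c' where c: "c \<in> C" "\<delta> c < 0" and c': "c' \<in> C" "\<delta> c' > 0"
      using zero_sum_has_pos_and_neg[OF \<open>finite C\<close> less.prems] by blast
    obtain L1 where L1: "transfers mv L1 c c'" "length L1 \<le> K" using connected[OF c(1) c'(1)] by blast
    define \<delta>' where "\<delta>' z = \<delta> z - (of_bool (z = c') - of_bool (z = c))" for z
    have abs_sum: "(\<Sum>z\<in>C. \<bar>\<delta>' z\<bar>) = (\<Sum>z\<in>C. \<bar>\<delta> z\<bar>) - 2"
      unfolding \<delta>'_def using sum_abs_after_unit_transfer[OF \<open>finite C\<close> c c'] .
    moreover have "(\<Sum>z\<in>C. \<bar>\<delta>' z\<bar>) \<ge> 0" by (rule sum_nonneg) simp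
    moreover have "sum \<delta>' C = 0"
      using less.prems c c' \<open>finite C\<close> by (simp add: \<delta>'_def sum_subtractf sum.delta')
    ultimately obtain L2 where L2: "\<forall>(s, t)\<in>set L2. mv s t" "\<forall>z\<in>C. net_gain L2 z = \<delta>' z"
        "2 * length L2 \<le> K * nat (\<Sum>z\<in>C. \<bar>\<delta>' z\<bar>)"
      using less.hyps[of \<delta>'] by fastforce
    have "nat (\<Sum>z\<in>C. \<bar>\<delta> z\<bar>) = nat (\<Sum>z\<in>C. \<bar>\<delta>' z\<bar>) + 2"
      using abs_sum \<open>(\<Sum>z\<in>C. \<bar>\<delta>' z\<bar>) \<ge> 0\<close> by linarith
    then have "K * nat (\<Sum>z\<in>C. \<bar>\<delta> z\<bar>) = K * nat (\<Sum>z\<in>C. \<bar>\<delta>' z\<bar>) + 2 * K" by simp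
    then show ?thesis
      using L1 L2 by (intro exI[of _ "L1 @ L2"]) (auto simp: transfers_def \<delta>'_def)
  qed
qed

section \<open>Moving vertices between clusters\<close>

lemma cls_partition_subset: "is_cls_partition k V P \<Longrightarrow> valid_cls k c \<Longrightarrow> P c \<subseteq> V"
  unfolding is_cls_partition_def by blast

lemma cls_partition_finite: "is_cls_partition k V P \<Longrightarrow> finite V \<Longrightarrow> valid_cls k c \<Longrightarrow> finite (P c)"
  using cls_partition_subset finite_subset by metis

lemma cls_partition_move_vertex:
  assumes part: "is_cls_partition k V P" and "finite V"
    and s: "valid_cls k s" "x \<in> P s" and t: "valid_cls k t"
  defines "P' \<equiv> \<lambda>c. if c = t then insert x (P c) else P c - {x}"
  shows "is_cls_partition k V P'"
    and "valid_cls k c \<Longrightarrow> int (card (P' c)) = int (card (P c)) + (of_bool (c = t) - of_bool (c = s))"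
proof -
  have disj: "x \<notin> P c" if "valid_cls k c" "c \<noteq> s" for c
    using part s that unfolding is_cls_partition_def by blast
  have "x \<in> V" using cls_partition_subset[OF part s(1)] s(2) by blast
  then show "is_cls_partition k V P'"
    using part t unfolding is_cls_partition_def P'_def by (auto split: if_splits)
  show "int (card (P' c)) = int (card (P c)) + (of_bool (c = t) - of_bool (c = s))" if "valid_cls k c"
  proof -
    have "finite (P c)" using cls_partition_finite[OF part \<open>finite V\<close> that] .
    consider "c = s" "c = t" | "c = s" "c \<noteq> t" | "c \<noteq> s" "c = t" | "c \<noteq> s" "c \<noteq> t" by blast
    then show "int (card (P' c)) = int (card (P c)) + (of_bool (c = t) - of_bool (c = s))"
    proof cases
      case 1
      then show ?thesis using s(2) by (simp add: P'_def insert_absorb)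
    next
      case 2
      then have "card (P c) > 0" using \<open>finite (P c)\<close> s(2) card_gt_0_iff by blast
      with 2 show ?thesis using \<open>finite (P c)\<close> s(2) by (simp add: P'_def of_nat_diff)
    next
      case 3
      then show ?thesis using disj[OF that] \<open>finite (P c)\<close> by (simp add: P'_def)
    next
      case 4
      then show ?thesis using disj[OF that] by (simp add: P'_def)
    qed
  qed
qed

lemma card_le_Suc_if_subset_insert: "finite A \<Longrightarrow> A' \<subseteq> insert x A \<Longrightarrow> card A' \<le> Suc (card A)"
  using card_mono[of "insert x A" A'] card_insert_if[of A x] by (auto split: if_splits)

lemma half_good_survives:
  assumes "finite A" "card A < 2 * card {x\<in>A. good x}" "2 * Suc l \<le> card A" "card (A - Q) \<le> l"
  shows "\<exists>x\<in>A \<inter> Q. good x"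
proof (rule ccontr)
  assume "\<not> ?thesis"
  then have "{x\<in>A. good x} \<subseteq> A - Q" by auto
  then have "card {x\<in>A. good x} \<le> l" using assms(1,4) card_mono[of "A - Q"] by (meson finite_Diff order_trans)
  then show False using assms(2,3) by simp
qed

lemma cls_partition_apply_moves:
  assumes part: "is_cls_partition k V P" and "finite V"
    and moves: "\<And>s t. (s, t) \<in> set L \<Longrightarrow>
      valid_cls k s \<and> valid_cls k t \<and> card (P s) < 2 * card {x\<in>P s. good t x}"
    and short: "\<And>c. valid_cls k c \<Longrightarrow> 2 * length L \<le> card (P c)"
    and good: "\<And>c x. valid_cls k c \<Longrightarrow> x \<in> P c \<Longrightarrow> good c x"
  shows "\<exists>Q. is_cls_partition k V Q \<and> (\<forall>c. valid_cls k c \<longrightarrow>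
    int (card (Q c)) = int (card (P c)) + net_gain L c \<and> card (P c - Q c) \<le> length L
    \<and> card (Q c - P c) \<le> length L \<and> (\<forall>x\<in>Q c. good c x))"
  using moves short
proof (induction L)
  case Nil
  then show ?case using part good by (intro exI[of _ P]) auto
next
  case (Cons m L)
  obtain s t where m: "m = (s, t)" by (cases m)
  have st: "valid_cls k s" "valid_cls k t" "card (P s) < 2 * card {x\<in>P s. good t x}"
    using Cons.prems(1)[of s t] m by auto
  obtain Q where Q: "is_cls_partition k V Q"
    and QP: "\<And>c. valid_cls k c \<Longrightarrow> int (card (Q c)) = int (card (P c)) + net_gain L c
      \<and> card (P c - Q c) \<le> length L \<and> card (Q c - P c) \<le> length L \<and> (\<forall>x\<in>Q c. good c x)"
    using Cons.IH Cons.prems by fastforce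
  have fin: "finite (P c)" if "valid_cls k c" for c using cls_partition_finite[OF part \<open>finite V\<close> that] .
  have "\<exists>x\<in>P s \<inter> Q s. good t x"
    using half_good_survives[OF fin[OF st(1)] st(3) _ conjunct1[OF conjunct2[OF QP[OF st(1)]]]]
      Cons.prems(2)[OF st(1)] by simp
  then obtain x where x: "x \<in> P s" "x \<in> Q s" "good t x" by blast
  define Q' where "Q' = (\<lambda>c. if c = t then insert x (Q c) else Q c - {x})"
  note move = cls_partition_move_vertex[OF Q \<open>finite V\<close> st(1) x(2) st(2)]
  have "int (card (Q' c)) = int (card (P c)) + net_gain (m # L) c"
    "card (P c - Q' c) \<le> length (m # L)" "card (Q' c - P c) \<le> length (m # L)" "\<forall>y\<in>Q' c. good c y"
    if "valid_cls k c" for c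
  proof -
    show "int (card (Q' c)) = int (card (P c)) + net_gain (m # L) c"
      using move(2)[OF that] QP[OF that] m unfolding Q'_def by simp
    have "P c - Q' c \<subseteq> insert x (P c - Q c)" "Q' c - P c \<subseteq> insert x (Q c - P c)"
      by (auto simp: Q'_def)
    then show "card (P c - Q' c) \<le> length (m # L)" "card (Q' c - P c) \<le> length (m # L)"
      using QP[OF that] fin[OF that] cls_partition_finite[OF Q \<open>finite V\<close> that]
      by (auto dest!: card_le_Suc_if_subset_insert[rotated])
    show "\<forall>y\<in>Q' c. good c y" using QP[OF that] x(3) by (auto simp: Q'_def)
  qed
  moreover have "is_cls_partition k V Q'" using move(1) unfolding Q'_def .
  ultimately show ?case by blast
qed

section \<open>Moves along the reduced graph\<close>

fun partner :: "cls \<Rightarrow> cls" where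
  "partner (ACl i) = BCl i"
| "partner (BCl i) = ACl i"

definition movable :: "(cls \<Rightarrow> cls \<Rightarrow> bool) \<Rightarrow> cls \<Rightarrow> cls \<Rightarrow> bool" where
  "movable R s t \<longleftrightarrow> R s (partner t)"

lemma valid_cls_partner [simp]: "valid_cls k (partner c) \<longleftrightarrow> valid_cls k c"
  by (cases c) (simp_all add: valid_cls_def)

lemma valid_cls_eq: "{c. valid_cls k c} = ACl ` {1..k} \<union> BCl ` {1..k}"
proof (rule set_eqI)
  show "c \<in> {c. valid_cls k c} \<longleftrightarrow> c \<in> ACl ` {1..k} \<union> BCl ` {1..k}" for c
    by (cases c) (auto simp: valid_cls_def)
qed

lemma finite_valid_cls: "finite {c. valid_cls k c}"
  unfolding valid_cls_eq by simp

lemma sum_valid_cls: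
  "(\<Sum>c\<in>{c. valid_cls k c}. f c) = (\<Sum>i=1..k. f (ACl i)) + (\<Sum>i=1..k. f (BCl i))"
  unfolding valid_cls_eq by (subst sum.union_disjoint) (auto simp: sum.reindex inj_on_def)

locale cycle_reduced_graph =
  fixes k :: nat and R :: "cls \<Rightarrow> cls \<Rightarrow> bool" and i1 j1 i2 j2 :: nat
  assumes sym: "\<And>c c'. R c c' \<Longrightarrow> R c' c"
    and cycle: "\<And>i. i \<in> {1..<k} \<Longrightarrow> R (BCl i) (ACl (i + 1))"
    and cycle_close: "R (BCl k) (ACl 1)"
    and A_edge: "i1 \<in> {1..k}" "j1 \<in> {1..k}" "R (ACl i1) (ACl j1)"
    and B_edge: "i2 \<in> {1..k}" "j2 \<in> {1..k}" "R (BCl i2) (BCl j2)"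
begin

lemma transfers_ACl_down:
  assumes "1 \<le> y" "y \<le> x" "x \<le> k"
  shows "\<exists>L. transfers (movable R) L (ACl x) (ACl y) \<and> length L \<le> x - y"
  using assms(2,3)
proof (induction x rule: dec_induct)
  case base
  show ?case using transfers_Nil by fastforce
next
  case (step n)
  then obtain L where "transfers (movable R) L (ACl n) (ACl y)" "length L \<le> n - y" by auto
  moreover have "movable R (ACl (Suc n)) (ACl n)"
    using sym cycle[of n] step assms(1) by (simp add: movable_def)
  ultimately show ?case
    using step(1) by (intro exI[of _ "(ACl (Suc n), ACl n) # L"])
      (auto dest: transfers_append[OF transfers_single])
qed

lemma transfers_BCl_up:
  assumes "1 \<le> x" "x \<le> y" "y \<le> k"
  shows "\<exists>L. transfers (movable R) L (BCl x) (BCl y) \<and> length L \<le> y - x"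
  using assms(2,3)
proof (induction y rule: dec_induct)
  case base
  show ?case using transfers_Nil by fastforce
next
  case (step n)
  then obtain L where "transfers (movable R) L (BCl x) (BCl n)" "length L \<le> n - x" by auto
  moreover have "movable R (BCl n) (BCl (Suc n))"
    using cycle[of n] step assms(1) by (simp add: movable_def)
  ultimately show ?case
    using step(1) by (intro exI[of _ "L @ [(BCl n, BCl (Suc n))]"])
      (auto intro: transfers_append transfers_single)
qed

lemma transfers_ACl:
  assumes "x \<in> {1..k}" "y \<in> {1..k}"
  shows "\<exists>L. transfers (movable R) L (ACl x) (ACl y) \<and> length L \<le> k"
proof (cases "y \<le> x")
  case True
  then show ?thesis using transfers_ACl_down[of y x] assms by fastforce
next
  case False
  obtain L1 where L1: "transfers (movable R) L1 (ACl x) (ACl 1)" "length L1 \<le> x - 1"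
    using transfers_ACl_down[of 1 x] assms by auto
  obtain L2 where L2: "transfers (movable R) L2 (ACl k) (ACl y)" "length L2 \<le> k - y"
    using transfers_ACl_down[of y k] assms by auto
  have "movable R (ACl 1) (ACl k)" using sym cycle_close by (simp add: movable_def)
  then have "transfers (movable R) (L1 @ [(ACl 1, ACl k)] @ L2) (ACl x) (ACl y)"
    using L1(1) L2(1) by (blast intro: transfers_append transfers_single)
  then show ?thesis using False assms L1(2) L2(2) by (intro exI) auto
qed

lemma transfers_BCl:
  assumes "x \<in> {1..k}" "y \<in> {1..k}"
  shows "\<exists>L. transfers (movable R) L (BCl x) (BCl y) \<and> length L \<le> k"
proof (cases "x \<le> y")
  case True
  then show ?thesis using transfers_BCl_up[of x y] assms by fastforce
next
  case False
  obtain L1 where L1: "transfers (movable R) L1 (BCl x) (BCl k)" "length L1 \<le> k - x"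
    using transfers_BCl_up[of x k] assms by auto
  obtain L2 where L2: "transfers (movable R) L2 (BCl 1) (BCl y)" "length L2 \<le> y - 1"
    using transfers_BCl_up[of 1 y] assms by auto
  have "movable R (BCl k) (BCl 1)" using cycle_close by (simp add: movable_def)
  then have "transfers (movable R) (L1 @ [(BCl k, BCl 1)] @ L2) (BCl x) (BCl y)"
    using L1(1) L2(1) by (blast intro: transfers_append transfers_single)
  then show ?thesis using False assms L1(2) L2(2) by (intro exI) auto
qed

lemma transfers_between_clusters:
  assumes "valid_cls k c" "valid_cls k c'"
  shows "\<exists>L. transfers (movable R) L c c' \<and> length L \<le> 2 * k + 1"
proof -
  have A_to_B: "movable R (ACl i1) (BCl j1)" and B_to_A: "movable R (BCl i2) (ACl j2)"
    using A_edge B_edge by (simp_all add: movable_def)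
  have "\<exists>L. transfers (movable R) L (ACl x) (BCl y) \<and> length L \<le> 2 * k + 1"
    if xy: "x \<in> {1..k}" "y \<in> {1..k}" for x y
  proof -
    obtain L1 L2 where "transfers (movable R) L1 (ACl x) (ACl i1)" "length L1 \<le> k"
      "transfers (movable R) L2 (BCl j1) (BCl y)" "length L2 \<le> k"
      using transfers_ACl[OF xy(1) A_edge(1)] transfers_BCl[OF A_edge(2) xy(2)] by blast
    moreover have "transfers (movable R) (L1 @ [(ACl i1, BCl j1)] @ L2) (ACl x) (BCl y)"
      using calculation A_to_B by (blast intro: transfers_append transfers_single)
    ultimately show ?thesis by (intro exI) auto
  qed
  moreover have "\<exists>L. transfers (movable R) L (BCl x) (ACl y) \<and> length L \<le> 2 * k + 1"
    if xy: "x \<in> {1..k}" "y \<in> {1..k}" for x y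
  proof -
    obtain L1 L2 where "transfers (movable R) L1 (BCl x) (BCl i2)" "length L1 \<le> k"
      "transfers (movable R) L2 (ACl j2) (ACl y)" "length L2 \<le> k"
      using transfers_BCl[OF xy(1) B_edge(1)] transfers_ACl[OF B_edge(2) xy(2)] by blast
    moreover have "transfers (movable R) (L1 @ [(BCl i2, ACl j2)] @ L2) (BCl x) (ACl y)"
      using calculation B_to_A by (blast intro: transfers_append transfers_single)
    ultimately show ?thesis by (intro exI) auto
  qed
  moreover note transfers_ACl transfers_BCl
  ultimately show ?thesis using assms
    by (cases c; cases c') (fastforce simp: valid_cls_def)+
qed

lemma moves_for_imbalances:
  fixes a b :: "nat \<Rightarrow> int"
  assumes "(\<Sum>i=1..k. a i) + (\<Sum>i=1..k. b i) = 0"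
  obtains L where "\<forall>(s, t)\<in>set L. movable R s t"
    and "\<And>i. i \<in> {1..k} \<Longrightarrow> net_gain L (ACl i) = a i" "\<And>i. i \<in> {1..k} \<Longrightarrow> net_gain L (BCl i) = b i"
    and "2 * length L \<le> (2 * k + 1) * nat ((\<Sum>i=1..k. \<bar>a i\<bar>) + (\<Sum>i=1..k. \<bar>b i\<bar>))"
proof -
  define \<delta> where "\<delta> c = (case c of ACl i \<Rightarrow> a i | BCl i \<Rightarrow> b i)" for c
  have "sum \<delta> {c. valid_cls k c} = 0" using assms by (simp add: sum_valid_cls \<delta>_def)
  then obtain L where L: "\<forall>(s, t)\<in>set L. movable R s t" "\<forall>c\<in>{c. valid_cls k c}. net_gain L c = \<delta> c"
    "2 * length L \<le> (2 * k + 1) * nat (\<Sum>c\<in>{c. valid_cls k c}. \<bar>\<delta> c\<bar>)"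
    using moves_with_net_gain[OF finite_valid_cls transfers_between_clusters] by blast
  have "(\<Sum>c\<in>{c. valid_cls k c}. \<bar>\<delta> c\<bar>) = (\<Sum>i=1..k. \<bar>a i\<bar>) + (\<Sum>i=1..k. \<bar>b i\<bar>)"
    by (simp add: sum_valid_cls \<delta>_def)
  show ?thesis
  proof (rule that[OF L(1)])
    show "net_gain L (ACl i) = a i" "net_gain L (BCl i) = b i" if "i \<in> {1..k}" for i
      using L(2) that by (auto simp: valid_cls_def \<delta>_def)
  qed (use L(3) \<open>(\<Sum>c\<in>{c. valid_cls k c}. \<bar>\<delta> c\<bar>) = _\<close> in simp)
qed

end

lemma super_regular_partner_degree:
  assumes "\<forall>i\<in>{1..k}. super_regular_pair eps d E (P (ACl i)) (P (BCl i))" "valid_cls k c" "x \<in> P c"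
  shows "d * card (P (partner c)) \<le> card {y\<in>P (partner c). E x y}"
  using assms by (cases c) (auto simp: valid_cls_def super_regular_pair_def)


section \<open>Rebalancing the clusters\<close>

lemma rebalance_keeping_high_degrees:
  fixes d eps :: real
  assumes "finite V" and part: "is_cls_partition k V P"
    and "cls_graph k R" and red: "reduced_graph_on eps d E k R P"
    and sr: "\<forall>i\<in>{1..k}. super_regular_pair eps d E (P (ACl i)) (P (BCl i))"
    and moves: "\<forall>(s, t)\<in>set L. movable R s t"
    and few: "\<And>c. valid_cls k c \<Longrightarrow> 2 * length L \<le> card (P c)"
    and par: "0 < eps" "2 * eps \<le> 1" "0 < d"
  obtains Q where "is_cls_partition k V Q"
    and "\<And>c. valid_cls k c \<Longrightarrow> int (card (Q c)) = int (card (P c)) + net_gain L c"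
    and "\<And>c. valid_cls k c \<Longrightarrow> card (P c - Q c) \<le> length L"
    and "\<And>c. valid_cls k c \<Longrightarrow> card (Q c - P c) \<le> length L"
    and "\<And>c x. valid_cls k c \<Longrightarrow> x \<in> Q c \<Longrightarrow>
      (d - eps) * card (P (partner c)) \<le> card {y\<in>P (partner c). E x y}"
proof -
  define high where "high c x \<longleftrightarrow> (d - eps) * card (P (partner c)) \<le> card {y\<in>P (partner c). E x y}"
    for c x
  have legal: "valid_cls k s \<and> valid_cls k t \<and> card (P s) < 2 * card {x\<in>P s. high t x}"
    if "(s, t) \<in> set L" for s t
  proof -
    have "R s (partner t)" using moves that by (auto simp: movable_def)
    then have "valid_cls k s" "valid_cls k (partner t)" "regular_pair eps d E (P s) (P (partner t))"
      using \<open>cls_graph k R\<close> red unfolding cls_graph_def reduced_graph_on_def by blast+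
    then show ?thesis
      using regular_pair_majority_high_degree[of eps d E "P s"] par unfolding high_def by simp
  qed
  have initially_high: "high c x" if "valid_cls k c" "x \<in> P c" for c x
    using super_regular_partner_degree[OF sr that] par mult_right_mono[of "d - eps" d "card (P (partner c))"]
    unfolding high_def by simp
  obtain Q where "is_cls_partition k V Q" and Q: "\<And>c. valid_cls k c \<Longrightarrow>
      int (card (Q c)) = int (card (P c)) + net_gain L c \<and> card (P c - Q c) \<le> length L
      \<and> card (Q c - P c) \<le> length L \<and> (\<forall>x\<in>Q c. high c x)"
    using cls_partition_apply_moves[OF part \<open>finite V\<close> legal few initially_high] by blast
  show ?thesis
  proof (rule that)
    show "is_cls_partition k V Q" by fact
  qed (use Q in \<open>auto simp: high_def\<close>)
qed

lemma super_regular_after_small_change: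
  fixes d d' eps eps' rho :: real
  assumes "finite V" and part: "is_cls_partition k V P" "is_cls_partition k V Q"
    and "cls_graph k R" and red: "reduced_graph_on eps d E k R P"
    and sr: "\<forall>i\<in>{1..k}. super_regular_pair eps d E (P (ACl i)) (P (BCl i))"
    and moved: "\<And>c. valid_cls k c \<Longrightarrow> card (P c - Q c) \<le> N" "\<And>c. valid_cls k c \<Longrightarrow> card (Q c - P c) \<le> N"
    and short: "\<And>c. valid_cls k c \<Longrightarrow> real N \<le> rho * card (P c)"
    and high: "\<And>c x. valid_cls k c \<Longrightarrow> x \<in> Q c \<Longrightarrow>
      (d - eps) * card (P (partner c)) \<le> card {y\<in>P (partner c). E x y}"
    and par: "0 < eps" "2 * eps \<le> eps'" "eps' \<le> 1" "4 * eps \<le> d" "d \<le> 1"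
      "0 < d'" "2 * d' \<le> d" "40 * rho \<le> eps * eps'"
  shows "reduced_graph_on eps' d' E k R Q"
    and "\<forall>i\<in>{1..k}. super_regular_pair eps' d' E (Q (ACl i)) (Q (BCl i))"
proof -
  have "eps * eps' \<le> eps" using par mult_left_le[of eps' eps] by linarith
  then have rho: "160 * rho \<le> d" "16 * rho \<le> d" "0 < d" using par by linarith+
  have fin: "finite (P c)" "finite (Q c)" if "valid_cls k c" for c
    using cls_partition_finite[OF _ \<open>finite V\<close> that] part by auto
  have regular: "regular_pair eps' d' E (Q c) (Q c')"
    if "regular_pair eps d E (P c) (P c')" "valid_cls k c" "valid_cls k c'" for c c'
    using regular_pair_perturb[OF that(1) fin(2)[OF that(2)] fin(2)[OF that(3)] moved(1,2)[OF that(2)]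
        moved(1,2)[OF that(3)] short[OF that(2)] short[OF that(3)] par(1-3) rho(3) par(7,8) rho(2)] .
  have degree: "d' * card (Q (partner c)) \<le> card {y\<in>Q (partner c). E x y}"
    if "valid_cls k c" "x \<in> Q c" for c x
  proof -
    have p: "valid_cls k (partner c)" using that(1) by simp
    show ?thesis
      using degree_perturb[where E = E and x = x, OF fin[OF p] moved(1,2)[OF p] short[OF p] high[OF that]
          par(4,7) rho(1) par(6,5)] .
  qed
  show "reduced_graph_on eps' d' E k R Q"
    using red \<open>cls_graph k R\<close> regular unfolding reduced_graph_on_def cls_graph_def by blast
  show "\<forall>i\<in>{1..k}. super_regular_pair eps' d' E (Q (ACl i)) (Q (BCl i))"
  proof
    fix i assume "i \<in> {1..k}"
    then have "valid_cls k (ACl i)" "valid_cls k (BCl i)" by (simp_all add: valid_cls_def)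
    then show "super_regular_pair eps' d' E (Q (ACl i)) (Q (BCl i))"
      using sr \<open>i \<in> {1..k}\<close> regular degree unfolding super_regular_pair_def by fastforce
  qed
qed

lemma rebalance_along_moves:
  fixes d d' eps eps' rho :: real
  assumes "finite V" and part: "is_cls_partition k V P"
    and "cls_graph k R" and red: "reduced_graph_on eps d E k R P"
    and sr: "\<forall>i\<in>{1..k}. super_regular_pair eps d E (P (ACl i)) (P (BCl i))"
    and moves: "\<forall>(s, t)\<in>set L. movable R s t"
    and short: "\<And>c. valid_cls k c \<Longrightarrow> real (length L) \<le> rho * card (P c)"
    and par: "0 < eps" "2 * eps \<le> eps'" "eps' \<le> 1" "4 * eps \<le> d" "d \<le> 1"
      "0 < d'" "2 * d' \<le> d" "40 * rho \<le> eps * eps'"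
  shows "\<exists>Q. is_cls_partition k V Q \<and>
    (\<forall>c. valid_cls k c \<longrightarrow> int (card (Q c)) = int (card (P c)) + net_gain L c) \<and>
    reduced_graph_on eps' d' E k R Q \<and> (\<forall>i\<in>{1..k}. super_regular_pair eps' d' E (Q (ACl i)) (Q (BCl i)))"
proof -
  have "eps * eps' \<le> eps" using par mult_left_le[of eps' eps] by linarith
  then have "80 * rho \<le> 1" "2 * eps \<le> 1" "0 < d" using par by linarith+
  then have few: "2 * length L \<le> card (P c)" if "valid_cls k c" for c
    using short[OF that] mult_right_mono[of "80 * rho" 1 "card (P c)"] by simp
  obtain Q where "is_cls_partition k V Q"
    and "\<And>c. valid_cls k c \<Longrightarrow> int (card (Q c)) = int (card (P c)) + net_gain L c"
    and "\<And>c. valid_cls k c \<Longrightarrow> card (P c - Q c) \<le> length L"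
    and "\<And>c. valid_cls k c \<Longrightarrow> card (Q c - P c) \<le> length L"
    and "\<And>c x. valid_cls k c \<Longrightarrow> x \<in> Q c \<Longrightarrow>
      (d - eps) * card (P (partner c)) \<le> card {y\<in>P (partner c). E x y}"
    using rebalance_keeping_high_degrees[OF assms(1-6) few par(1) \<open>2 * eps \<le> 1\<close> \<open>0 < d\<close>] by blast
  then show ?thesis
    using super_regular_after_small_change[OF assms(1,2) _ assms(3-5) _ _ short _ par] by blast
qed

lemma moves_budget:
  fixes k :: nat and l S xi n p rho :: real
  assumes "2 * l \<le> (2 * real k + 1) * S" "S \<le> 2 * real k * (xi * n)" "n \<le> 3 * real k * p"
    and "9 * real k ^ 3 * xi \<le> rho" "1 \<le> k" "0 \<le> xi" "0 \<le> S" "0 \<le> p"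
  shows "l \<le> rho * p"
proof -
  have "(2 * real k + 1) * S \<le> 3 * real k * S" using assms(5,7) by (intro mult_right_mono) auto
  also have "\<dots> \<le> 3 * real k * (2 * real k * (xi * n))" using assms(2) by (intro mult_left_mono) auto
  finally have "l \<le> 3 * real k ^ 2 * xi * n" using assms(1) by (simp add: power2_eq_square mult_ac)
  also have "\<dots> \<le> 3 * real k ^ 2 * xi * (3 * real k * p)" using assms(3,6) by (intro mult_left_mono) auto
  also have "\<dots> = 9 * real k ^ 3 * xi * p" by (simp add: power2_eq_square power3_eq_cube)
  also have "\<dots> \<le> rho * p" using assms(4,8) by (intro mult_right_mono)
  finally show ?thesis .
qed

lemma rebalance_clusters:
  fixes d d' eps eps' xi :: real and k :: nat and a b :: "nat \<Rightarrow> int"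
  assumes par: "0 < d'" "2 * d' \<le> d" "d \<le> 1" "0 < eps" "2 * eps \<le> eps'" "4 * eps \<le> d" "eps' \<le> 1"
      "1 \<le> k" "0 < xi" "360 * real k ^ 3 * xi \<le> eps * eps'"
    and "simple_graph V E" and part: "is_cls_partition k V P"
    and size: "\<forall>i\<in>{1..k}. real (card (P (ACl i))) \<ge> real (card V) / (3 * real k)
                 \<and> real (card (P (BCl i))) \<ge> real (card V) / (3 * real k)"
    and cg: "cls_graph k R" and red: "reduced_graph_on eps d E k R P"
    and cycle: "\<forall>i\<in>{1..<k}. R (BCl i) (ACl (i + 1))" "R (BCl k) (ACl 1)"
    and A_edge: "\<exists>i1\<in>{1..k}. \<exists>j1\<in>{1..k}. i1 \<noteq> j1 \<and> R (ACl i1) (ACl j1)"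
    and B_edge: "\<exists>i2\<in>{1..k}. \<exists>j2\<in>{1..k}. i2 \<noteq> j2 \<and> R (BCl i2) (BCl j2)"
    and sr: "\<forall>i\<in>{1..k}. super_regular_pair eps d E (P (ACl i)) (P (BCl i))"
    and small: "\<forall>i\<in>{1..k}. real_of_int \<bar>a i\<bar> < xi * real (card V) \<and> real_of_int \<bar>b i\<bar> < xi * real (card V)"
    and balanced: "(\<Sum>i=1..k. a i) + (\<Sum>i=1..k. b i) = 0"
  shows "\<exists>P'. is_cls_partition k V P' \<and>
         (\<forall>i\<in>{1..k}. int (card (P' (ACl i))) = int (card (P (ACl i))) + a i
                    \<and> int (card (P' (BCl i))) = int (card (P (BCl i))) + b i) \<and>
         reduced_graph_on eps' d' E k R P' \<and>
         (\<forall>i\<in>{1..k}. super_regular_pair eps' d' E (P' (ACl i)) (P' (BCl i)))"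
proof -
  obtain i1 j1 i2 j2 where "i1 \<in> {1..k}" "j1 \<in> {1..k}" "R (ACl i1) (ACl j1)"
    "i2 \<in> {1..k}" "j2 \<in> {1..k}" "R (BCl i2) (BCl j2)"
    using A_edge B_edge by blast
  then interpret cycle_reduced_graph k R i1 j1 i2 j2
    using cg cycle unfolding cls_graph_def by unfold_locales blast+
  define S where "S = (\<Sum>i=1..k. \<bar>a i\<bar>) + (\<Sum>i=1..k. \<bar>b i\<bar>)"
  obtain L where L: "\<forall>(s, t)\<in>set L. movable R s t"
    "\<And>i. i \<in> {1..k} \<Longrightarrow> net_gain L (ACl i) = a i" "\<And>i. i \<in> {1..k} \<Longrightarrow> net_gain L (BCl i) = b i"
    "2 * length L \<le> (2 * k + 1) * nat S"
    using moves_for_imbalances[OF balanced] unfolding S_def by blast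
  have "S \<ge> 0" unfolding S_def by (simp add: sum_nonneg)
  have "real_of_int S \<le> (\<Sum>i=1..k. xi * card V) + (\<Sum>i=1..k. xi * card V)"
    unfolding S_def using small by (simp only: of_int_add of_int_sum) (intro add_mono sum_mono; fastforce)
  then have S_small: "real_of_int S \<le> 2 * real k * (xi * card V)" by (simp add: mult_ac)
  have short: "real (length L) \<le> eps * eps' / 40 * card (P c)" if "valid_cls k c" for c
  proof (rule moves_budget)
    have "real (2 * length L) \<le> real ((2 * k + 1) * nat S)" using L(4) of_nat_mono by blast
    then show "2 * real (length L) \<le> (2 * real k + 1) * real_of_int S" using \<open>S \<ge> 0\<close> by (simp add: algebra_simps)
    show "real (card V) \<le> 3 * real k * real (card (P c))"
      using size that par(8) by (cases c) (auto simp: valid_cls_def divide_le_eq mult_ac)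
  qed (use S_small \<open>S \<ge> 0\<close> par in auto)
  have "finite V" using \<open>simple_graph V E\<close> unfolding simple_graph_def by blast
  then show ?thesis
    using rebalance_along_moves[OF _ part cg red sr L(1) short par(4,5,7,6,3,1,2)] L(2,3)
    by (auto simp: valid_cls_def)
qed

theorem lemma6p1:
  shows "\<exists>d0>0. \<forall>d. 0 < d \<and> d \<le> d0 \<longrightarrow>
   (\<exists>d'0>0. \<forall>d'. 0 < d' \<and> d' \<le> d'0 \<longrightarrow>
   (\<exists>eps'0>0. \<forall>eps'. 0 < eps' \<and> eps' \<le> eps'0 \<longrightarrow>
   (\<exists>eps0>0. \<forall>eps. 0 < eps \<and> eps \<le> eps0 \<longrightarrow>
   (\<exists>k0::nat. \<forall>k::nat. k \<ge> k0 \<and> k \<ge> 1 \<longrightarrow>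
   (\<exists>xi0>0. \<forall>xi. 0 < xi \<and> xi \<le> xi0 \<longrightarrow>
   (\<forall>(V::nat set) E (R::cls \<Rightarrow> cls \<Rightarrow> bool) (P::cls \<Rightarrow> nat set) (a::nat \<Rightarrow> int) (b::nat \<Rightarrow> int).
      simple_graph V E \<longrightarrow>
      is_cls_partition k V P \<longrightarrow>
      (\<forall>i\<in>{1..k}. real (card (P (ACl i))) \<ge> real (card V) / (3 * real k)
                 \<and> real (card (P (BCl i))) \<ge> real (card V) / (3 * real k)) \<longrightarrow>
      cls_graph k R \<longrightarrow>
      reduced_graph_on eps d E k R P \<longrightarrow>
      (\<forall>i\<in>{1..k}. R (ACl i) (BCl i)) \<longrightarrow>
      (\<forall>i\<in>{1..<k}. R (BCl i) (ACl (i + 1))) \<longrightarrow>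
      R (BCl k) (ACl 1) \<longrightarrow>
      (\<exists>i1\<in>{1..k}. \<exists>j1\<in>{1..k}. i1 \<noteq> j1 \<and> R (ACl i1) (ACl j1)) \<longrightarrow>
      (\<exists>i2\<in>{1..k}. \<exists>j2\<in>{1..k}. i2 \<noteq> j2 \<and> R (BCl i2) (BCl j2)) \<longrightarrow>
      (\<forall>i\<in>{1..k}. super_regular_pair eps d E (P (ACl i)) (P (BCl i))) \<longrightarrow>
      (\<forall>i\<in>{1..k}. real_of_int \<bar>a i\<bar> < xi * real (card V)
                 \<and> real_of_int \<bar>b i\<bar> < xi * real (card V)) \<longrightarrow>
      (\<Sum>i=1..k. a i) + (\<Sum>i=1..k. b i) = 0 \<longrightarrow>
      \<bar>\<Sum>i=1..k. a i\<bar> = \<bar>\<Sum>i=1..k. b i\<bar> \<longrightarrow>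
      real_of_int \<bar>\<Sum>i=1..k. a i\<bar> \<le> xi * real (card V) \<longrightarrow>
      (\<exists>P'::cls \<Rightarrow> nat set.
         is_cls_partition k V P' \<and>
         (\<forall>i\<in>{1..k}. int (card (P' (ACl i))) = int (card (P (ACl i))) + a i
                    \<and> int (card (P' (BCl i))) = int (card (P (BCl i))) + b i) \<and>
         reduced_graph_on eps' d' E k R P' \<and>
         (\<forall>i\<in>{1..k}. super_regular_pair eps' d' E (P' (ACl i)) (P' (BCl i))))))))))"
  apply (rule exI[of _ 1], intro conjI allI impI, simp)
  apply (rule_tac x = "d / 2" in exI, intro conjI allI impI, simp)
  apply (rule_tac x = 1 in exI, intro conjI allI impI, simp)
  apply (rule_tac x = "min (eps' / 2) (d / 4)" in exI, intro conjI allI impI, simp)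
  apply (rule_tac x = 1 in exI, intro allI impI)
  apply (rule_tac x = "eps * eps' / (360 * real k ^ 3)" in exI, intro conjI allI impI, simp)
  subgoal for d d' eps' eps k xi
    by (rule rebalance_clusters[of d' d eps eps' k xi]) (simp_all add: field_simps)
  done

end
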